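(* Let $a<b$, let $F:(a,b)\to\mathcal{K}(\mathbb{R}^n)$ be metrically differentiable at $x_0\in(a,b)$. Then, as $x\to x_0$ with $x\in(a,b)$: (i) $\mathrm{haus}\big(L^MF|_{y_0}(x),\ \{y_0\}+(x-x_0)[x_0,x]^MF|_{y_0}\big)=o(|x-x_0|)$ uniformly in $y_0\in F(x_0)$, i.e. $\sup_{y_0\in F(x_0)}\mathrm{haus}\big(L^MF|_{y_0}(x),\{y_0\}+(x-x_0)[x_0,x]^MF|_{y_0}\big)/|x-x_0|\to0$; (ii) $\mathrm{haus}(F(x),L^MF(x))=o(|x-x_0|)$.
   Context: $\mathcal{K}(\mathbb{R}^n)$ is the set of nonempty compact subsets of $\mathbb{R}^n$, $|\cdot|$ the Euclidean norm, $\mathrm{dist}(x,A)=\min_{a\in A}|x-a|$, $\mathrm{haus}$ the Hausdorff distance. For $c\in\mathbb{R}^n$, $\lambda\in\mathbb{R}$ and a set $A$: $\{c\}+\lambda A=\{c+\lambda a: a\in A\}$. For $a\in\mathbb{R}^n$, $B\in\mathcal{K}(\mathbb{R}^n)$, $\Pi_B(a)=\{b\in B:|a-b|=\mathrm{dist}(a,B)\}$; for $A,B\in\mathcal{K}(\mathbb{R}^n)$, $\Pi(A,B)=\{(a,b)\in A\times B: a\in\Pi_A(b)\text{ or }b\in\Pi_B(a)\}$ (metric pairs). For $x\ne x_0$ and $y_0\in F(x_0)$: $[x_0,x]^MF|_{y_0}=\{\frac{y-y_0}{x-x_0}:(y_0,y)\in\Pi(F(x_0),F(x))\}$. $F$ is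 metrically differentiable from the right at $x_0$ if for every $y\in F(x_0)$ there is a nonempty set $D^M_+F(x_0)|_y$ such that $\sup_{y\in F(x_0)}\mathrm{haus}(D^M_+F(x_0)|_y,[x_0,x]^MF|_y)\to0$ as $x\to x_0^+$; from the left analogously with $D^M_-F(x_0)|_y$ and $x\to x_0^-$; metrically differentiable at $x_0$ means both. The local metric linear approximant anchored at $y_0\in F(x_0)$ is $L^MF|_{y_0}(x)=\{y_0\}+(x-x_0)D^M_+F(x_0)|_{y_0}$ for $x\ge x_0$ and $L^MF|_{y_0}(x)=\{y_0\}+(x-x_0)D^M_-F(x_0)|_{y_0}$ for $x<x_0$; the local metric linear approximant is $L^MF(x)=\bigcup_{y\in F(x_0)}L^MF|_y(x)$. *)

theory Defs
  imports "HOL-Analysis.Analysis"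
begin

text \<open>Hausdorff distance (used for nonempty bounded sets; for compact sets the suprema are maxima).\<close>
definition haus :: "'a::metric_space set \<Rightarrow> 'a set \<Rightarrow> real" where
  "haus A B = max (SUP a\<in>A. infdist a B) (SUP b\<in>B. infdist b A)"

definition mproj :: "'a::metric_space set \<Rightarrow> 'a \<Rightarrow> 'a set" where
  "mproj B a = {b \<in> B. dist a b = infdist a B}"

definition metric_pairs :: "'a::metric_space set \<Rightarrow> 'a set \<Rightarrow> ('a \<times> 'a) set" where
  "metric_pairs A B = {(a, b). a \<in> A \<and> b \<in> B \<and> (a \<in> mproj A b \<or> b \<in> mproj B a)}"

definition mdd :: "(real \<Rightarrow> 'a::real_normed_vector set) \<Rightarrow> real \<Rightarrow> real \<Rightarrow> 'a \<Rightarrow> 'a set" where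
  "mdd F x0 x y0 = {(y - y0) /\<^sub>R (x - x0) | y. (y0, y) \<in> metric_pairs (F x0) (F x)}"

text \<open>D is a one-sided metric derivative of F at x0 along the filter (at_right x0 or at_left x0):
  each D y is nonempty (and bounded, which is forced by finiteness of the Hausdorff distance), and
  sup over y in F x0 of haus (D y) (mdd F x0 x y) tends to 0.\<close>
definition is_metric_deriv_along ::
  "(real \<Rightarrow> 'a::real_normed_vector set) \<Rightarrow> real \<Rightarrow> real filter \<Rightarrow> ('a \<Rightarrow> 'a set) \<Rightarrow> bool" where
  "is_metric_deriv_along F x0 fl D \<longleftrightarrow>
     (\<forall>y\<in>F x0. D y \<noteq> {} \<and> bounded (D y)) \<and>
     (\<forall>e>0. eventually (\<lambda>x. \<forall>y\<in>F x0. haus (D y) (mdd F x0 x y) \<le> e) fl)"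

definition metrically_diff_right :: "(real \<Rightarrow> 'a::real_normed_vector set) \<Rightarrow> real \<Rightarrow> bool" where
  "metrically_diff_right F x0 \<longleftrightarrow> (\<exists>D. is_metric_deriv_along F x0 (at_right x0) D)"

definition metrically_diff_left :: "(real \<Rightarrow> 'a::real_normed_vector set) \<Rightarrow> real \<Rightarrow> bool" where
  "metrically_diff_left F x0 \<longleftrightarrow> (\<exists>D. is_metric_deriv_along F x0 (at_left x0) D)"

text \<open>Local metric linear approximant anchored at y0, built from chosen one-sided derivatives Dp, Dm.\<close>
definition LM_anchor :: "('a \<Rightarrow> 'a set) \<Rightarrow> ('a \<Rightarrow> 'a set) \<Rightarrow> real \<Rightarrow> 'a::real_normed_vector \<Rightarrow> real \<Rightarrow> 'a set" where
  "LM_anchor Dp Dm x0 y0 x =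
     (if x \<ge> x0 then (\<lambda>d. y0 + (x - x0) *\<^sub>R d) ` Dp y0 else (\<lambda>d. y0 + (x - x0) *\<^sub>R d) ` Dm y0)"

definition LM :: "(real \<Rightarrow> 'a set) \<Rightarrow> ('a \<Rightarrow> 'a set) \<Rightarrow> ('a \<Rightarrow> 'a set) \<Rightarrow> real \<Rightarrow> real \<Rightarrow> 'a::real_normed_vector set" where
  "LM F Dp Dm x0 x = (\<Union>y\<in>F x0. LM_anchor Dp Dm x0 y x)"

end

theory Submission
  imports Defs
begin

text \<open>For x \<noteq> x0, the point y0 + (x - x0) d with d \<in> [x0,x]^M F|_{y0} is exactly the partner y of y0
  in a metric pair, so F(x) is the union over y0 \<in> F(x0) of the sets y0 + (x - x0) [x0,x]^M F|_{y0}
  (every z \<in> F(x) pairs with a nearest point of F(x0)). The anchored approximant replaces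
  [x0,x]^M F|_{y0} by the one-sided derivative, and both estimates follow because the affine map
  d \<mapsto> y0 + (x - x0) d scales Hausdorff distances by |x - x0| and the Hausdorff distance of two
  unions is bounded by the largest distance between corresponding members.\<close>

lemma haus_leI:
  fixes A B :: "'a::metric_space set"
  assumes "A \<noteq> {}" "B \<noteq> {}" "\<forall>a\<in>A. infdist a B \<le> c" "\<forall>b\<in>B. infdist b A \<le> c"
  shows "haus A B \<le> c"
  unfolding haus_def using assms by (auto intro!: cSUP_least)

lemma haus_commute: "haus A B = haus B A"
  unfolding haus_def by (simp add: max.commute)

lemma infdist_le_haus:
  fixes A B :: "'a::metric_space set"
  assumes "bounded A" "a \<in> A" "B \<noteq> {}"
  shows "infdist a B \<le> haus A B"
proof -
  obtain b where b: "b \<in> B" using assms(3) by auto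
  obtain z r where zr: "\<forall>x\<in>A. dist z x \<le> r" using assms(1) unfolding bounded_def by auto
  have "infdist x B \<le> r + dist z b" if "x \<in> A" for x
  proof -
    have "infdist x B \<le> dist x b" using b by (rule infdist_le)
    also have "\<dots> \<le> dist x z + dist z b" by (rule dist_triangle)
    also have "\<dots> \<le> r + dist z b" using zr that by (simp add: dist_commute)
    finally show ?thesis .
  qed
  then have "bdd_above ((\<lambda>x. infdist x B) ` A)" by (meson bdd_aboveI2)
  then have "infdist a B \<le> (SUP x\<in>A. infdist x B)" using assms(2) by (rule cSUP_upper2) simp
  then show ?thesis unfolding haus_def by simp
qed

lemma haus_UN_le:
  fixes A B :: "'i \<Rightarrow> 'a::metric_space set"
  assumes "I \<noteq> {}"
    and "\<And>i. i \<in> I \<Longrightarrow> A i \<noteq> {} \<and> B i \<noteq> {} \<and> bounded (A i) \<and> bounded (B i)"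
    and "\<And>i. i \<in> I \<Longrightarrow> haus (A i) (B i) \<le> c"
  shows "haus (\<Union>i\<in>I. A i) (\<Union>i\<in>I. B i) \<le> c"
proof (rule haus_leI)
  show "(\<Union>i\<in>I. A i) \<noteq> {}" "(\<Union>i\<in>I. B i) \<noteq> {}" using assms(1,2) by auto
  show "\<forall>a\<in>(\<Union>i\<in>I. A i). infdist a (\<Union>i\<in>I. B i) \<le> c"
  proof
    fix a assume "a \<in> (\<Union>i\<in>I. A i)"
    then obtain i where i: "i \<in> I" "a \<in> A i" by auto
    have "infdist a (\<Union>i\<in>I. B i) \<le> infdist a (B i)" using i assms(2) by (intro infdist_mono) auto
    also have "\<dots> \<le> haus (A i) (B i)" using i assms(2) by (intro infdist_le_haus) auto
    also have "\<dots> \<le> c" using i(1) by (rule assms(3))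
    finally show "infdist a (\<Union>i\<in>I. B i) \<le> c" .
  qed
  show "\<forall>b\<in>(\<Union>i\<in>I. B i). infdist b (\<Union>i\<in>I. A i) \<le> c"
  proof
    fix b assume "b \<in> (\<Union>i\<in>I. B i)"
    then obtain i where i: "i \<in> I" "b \<in> B i" by auto
    have "infdist b (\<Union>i\<in>I. A i) \<le> infdist b (A i)" using i assms(2) by (intro infdist_mono) auto
    also have "\<dots> \<le> haus (B i) (A i)" using i assms(2) by (intro infdist_le_haus) auto
    also have "\<dots> \<le> c" using assms(3)[OF i(1)] by (simp add: haus_commute)
    finally show "infdist b (\<Union>i\<in>I. A i) \<le> c" .
  qed
qed

lemma infdist_affine_image_le:
  fixes a y0 :: "'a::real_normed_vector"
  shows "infdist (y0 + t *\<^sub>R a) ((\<lambda>d. y0 + t *\<^sub>R d) ` M) \<le> \<bar>t\<bar> * infdist a M"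
proof (cases "M = {} \<or> t = 0")
  case True
  then consider "M = {}" | "M \<noteq> {}" "t = 0" by blast
  then show ?thesis by cases (simp_all add: infdist_def image_constant_conv)
next
  case False
  have "infdist (y0 + t *\<^sub>R a) ((\<lambda>d. y0 + t *\<^sub>R d) ` M) / \<bar>t\<bar> \<le> dist a m" if "m \<in> M" for m
  proof -
    have "infdist (y0 + t *\<^sub>R a) ((\<lambda>d. y0 + t *\<^sub>R d) ` M) \<le> dist (y0 + t *\<^sub>R a) (y0 + t *\<^sub>R m)"
      using that by (intro infdist_le) auto
    also have "\<dots> = \<bar>t\<bar> * dist a m"
      by (simp add: dist_norm scaleR_diff_right[symmetric])
    finally show ?thesis using False by (simp add: divide_le_eq mult.commute)
  qed
  then have "infdist (y0 + t *\<^sub>R a) ((\<lambda>d. y0 + t *\<^sub>R d) ` M) / \<bar>t\<bar> \<le> infdist a M"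
    unfolding infdist_def using False by (auto intro: cINF_greatest)
  then show ?thesis using False by (simp add: divide_le_eq mult.commute)
qed

lemma bounded_affine_image:
  fixes A :: "'a::real_normed_vector set"
  assumes "bounded A"
  shows "bounded ((\<lambda>d. y0 + t *\<^sub>R d) ` A)"
  using bounded_translation[OF bounded_scaling[OF assms, of t], of y0] by (simp add: image_image)

lemma haus_affine_image_le:
  fixes A B :: "'a::real_normed_vector set"
  assumes "A \<noteq> {}" "B \<noteq> {}" "bounded A" "bounded B" "haus A B \<le> c"
  shows "haus ((\<lambda>d. y0 + t *\<^sub>R d) ` A) ((\<lambda>d. y0 + t *\<^sub>R d) ` B) \<le> \<bar>t\<bar> * c"
proof -
  have "infdist (y0 + t *\<^sub>R a) ((\<lambda>d. y0 + t *\<^sub>R d) ` N) \<le> \<bar>t\<bar> * c"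
    if "a \<in> M" "bounded M" "N \<noteq> {}" "haus M N \<le> c" for a M N
  proof -
    have "infdist a N \<le> c" using infdist_le_haus[OF that(2,1,3)] that(4) by linarith
    then show ?thesis
      using infdist_affine_image_le[of y0 t a N] by (meson abs_ge_zero mult_left_mono order_trans)
  qed
  then show ?thesis
    using assms by (intro haus_leI) (auto simp: haus_commute)
qed

lemma mdd_nonempty:
  fixes F :: "real \<Rightarrow> 'a::{real_normed_vector,heine_borel} set"
  assumes "closed (F x)" "F x \<noteq> {}" "y0 \<in> F x0"
  shows "mdd F x0 x y0 \<noteq> {}"
proof -
  obtain y where "y \<in> F x" "infdist y0 (F x) = dist y0 y"
    using infdist_attains_inf[OF assms(1,2)] by blast
  then have "(y0, y) \<in> metric_pairs (F x0) (F x)"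
    using assms(3) unfolding metric_pairs_def mproj_def by auto
  then show ?thesis unfolding mdd_def by blast
qed

lemma mdd_bounded:
  fixes F :: "real \<Rightarrow> 'a::real_normed_vector set"
  assumes "bounded (F x)"
  shows "bounded (mdd F x0 x y0)"
proof -
  have "mdd F x0 x y0 \<subseteq> (\<lambda>y. inverse (x - x0) *\<^sub>R y) ` (\<lambda>y. y - y0) ` F x"
    unfolding mdd_def metric_pairs_def by (auto simp: image_image)
  then show ?thesis
    using assms bounded_scaling bounded_translation_minus bounded_subset by metis
qed

lemma Union_affine_image_mdd:
  fixes F :: "real \<Rightarrow> 'a::{real_normed_vector,heine_borel} set"
  assumes "closed (F x0)" "F x0 \<noteq> {}" "x \<noteq> x0"
  shows "(\<Union>y0\<in>F x0. (\<lambda>d. y0 + (x - x0) *\<^sub>R d) ` mdd F x0 x y0) = F x"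
proof
  show "(\<Union>y0\<in>F x0. (\<lambda>d. y0 + (x - x0) *\<^sub>R d) ` mdd F x0 x y0) \<subseteq> F x"
    using assms(3) unfolding mdd_def metric_pairs_def by auto
  show "F x \<subseteq> (\<Union>y0\<in>F x0. (\<lambda>d. y0 + (x - x0) *\<^sub>R d) ` mdd F x0 x y0)"
  proof
    fix z assume z: "z \<in> F x"
    obtain y0 where y0: "y0 \<in> F x0" "infdist z (F x0) = dist z y0"
      using infdist_attains_inf[OF assms(1,2)] by blast
    then have "(y0, z) \<in> metric_pairs (F x0) (F x)"
      using z unfolding metric_pairs_def mproj_def by (auto simp: dist_commute)
    then have "(z - y0) /\<^sub>R (x - x0) \<in> mdd F x0 x y0" unfolding mdd_def by blast
    moreover have "z = y0 + (x - x0) *\<^sub>R ((z - y0) /\<^sub>R (x - x0))" using assms(3) by simp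
    ultimately show "z \<in> (\<Union>y0\<in>F x0. (\<lambda>d. y0 + (x - x0) *\<^sub>R d) ` mdd F x0 x y0)"
      using y0(1) by blast
  qed
qed

lemma haus_linear_approx_le:
  fixes F :: "real \<Rightarrow> 'a::{real_normed_vector,heine_borel} set"
  assumes "compact (F x0)" "F x0 \<noteq> {}" "compact (F x)" "F x \<noteq> {}" "x \<noteq> x0"
    and D: "\<And>y. y \<in> F x0 \<Longrightarrow> D y \<noteq> {} \<and> bounded (D y)"
    and close: "\<And>y. y \<in> F x0 \<Longrightarrow> haus (D y) (mdd F x0 x y) \<le> e"
  shows "\<forall>y0\<in>F x0. haus ((\<lambda>d. y0 + (x - x0) *\<^sub>R d) ` D y0)
                        ((\<lambda>d. y0 + (x - x0) *\<^sub>R d) ` mdd F x0 x y0) \<le> e * \<bar>x - x0\<bar>"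
    and "haus (F x) (\<Union>y0\<in>F x0. (\<lambda>d. y0 + (x - x0) *\<^sub>R d) ` D y0) \<le> e * \<bar>x - x0\<bar>"
proof -
  have mdd_regular: "mdd F x0 x y \<noteq> {} \<and> bounded (mdd F x0 x y)" if "y \<in> F x0" for y
    using assms(3,4) that by (simp add: mdd_nonempty mdd_bounded compact_imp_closed compact_imp_bounded)
  have anchored: "haus ((\<lambda>d. y0 + (x - x0) *\<^sub>R d) ` D y0) ((\<lambda>d. y0 + (x - x0) *\<^sub>R d) ` mdd F x0 x y0)
                    \<le> e * \<bar>x - x0\<bar>" if "y0 \<in> F x0" for y0
    using haus_affine_image_le[of "D y0" "mdd F x0 x y0" e y0 "x - x0"] D[OF that] mdd_regular[OF that] close[OF that]
    by (simp add: mult.commute)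
  then show "\<forall>y0\<in>F x0. haus ((\<lambda>d. y0 + (x - x0) *\<^sub>R d) ` D y0)
                        ((\<lambda>d. y0 + (x - x0) *\<^sub>R d) ` mdd F x0 x y0) \<le> e * \<bar>x - x0\<bar>" by blast
  have "haus (\<Union>y0\<in>F x0. (\<lambda>d. y0 + (x - x0) *\<^sub>R d) ` mdd F x0 x y0)
             (\<Union>y0\<in>F x0. (\<lambda>d. y0 + (x - x0) *\<^sub>R d) ` D y0) \<le> e * \<bar>x - x0\<bar>"
    using assms(2) D mdd_regular anchored by (intro haus_UN_le) (auto simp: bounded_affine_image haus_commute)
  then show "haus (F x) (\<Union>y0\<in>F x0. (\<lambda>d. y0 + (x - x0) *\<^sub>R d) ` D y0) \<le> e * \<bar>x - x0\<bar>"
    using Union_affine_image_mdd[of F x0 x] assms(1,2,5) by (simp add: compact_imp_closed)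
qed

lemma eventually_LM_approx_along:
  fixes F :: "real \<Rightarrow> 'a::{real_normed_vector,heine_borel} set"
  assumes deriv: "is_metric_deriv_along F x0 fl D" and "e > 0" "compact (F x0)" "F x0 \<noteq> {}"
    and side: "eventually (\<lambda>x. x \<noteq> x0 \<and> compact (F x) \<and> F x \<noteq> {} \<and>
                 (\<forall>y. LM_anchor Dp Dm x0 y x = (\<lambda>d. y + (x - x0) *\<^sub>R d) ` D y)) fl"
  shows "eventually (\<lambda>x. (\<forall>y0\<in>F x0.
             haus (LM_anchor Dp Dm x0 y0 x) ((\<lambda>d. y0 + (x - x0) *\<^sub>R d) ` mdd F x0 x y0)
               \<le> e * \<bar>x - x0\<bar>) \<and> haus (F x) (LM F Dp Dm x0 x) \<le> e * \<bar>x - x0\<bar>) fl"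
proof -
  have "eventually (\<lambda>x. \<forall>y\<in>F x0. haus (D y) (mdd F x0 x y) \<le> e) fl"
    using deriv \<open>e > 0\<close> unfolding is_metric_deriv_along_def by blast
  with side show ?thesis
  proof eventually_elim
    case (elim x)
    then show ?case
      using haus_linear_approx_le[of F x0 x D e] deriv assms(3,4)
      unfolding is_metric_deriv_along_def LM_def by auto
  qed
qed

theorem mainTheorem2:
  fixes F :: "real \<Rightarrow> 'a::euclidean_space set"
    and a b x0 :: real
    and Dp Dm :: "'a \<Rightarrow> 'a set"
  assumes "a < b"
    and "\<forall>x\<in>{a<..<b}. compact (F x) \<and> F x \<noteq> {}"
    and "x0 \<in> {a<..<b}"
    and "is_metric_deriv_along F x0 (at_right x0) Dp"
    and "is_metric_deriv_along F x0 (at_left x0) Dm"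
  shows "(\<forall>e>0. eventually (\<lambda>x. x \<in> {a<..<b} \<and> (\<forall>y0\<in>F x0.
             haus (LM_anchor Dp Dm x0 y0 x) ((\<lambda>d. y0 + (x - x0) *\<^sub>R d) ` mdd F x0 x y0)
               \<le> e * \<bar>x - x0\<bar>)) (at x0))
       \<and> (\<forall>e>0. eventually (\<lambda>x. x \<in> {a<..<b} \<and>
             haus (F x) (LM F Dp Dm x0 x) \<le> e * \<bar>x - x0\<bar>) (at x0))"
proof -
  have F0: "compact (F x0)" "F x0 \<noteq> {}" using assms(2,3) by auto
  have near: "eventually (\<lambda>x. x \<in> {a<..<b}) (at x0)"
    using assms(3) by (intro eventually_at_in_open') auto
  then have "eventually (\<lambda>x. compact (F x) \<and> F x \<noteq> {}) (at x0)"
    using assms(2) by (auto elim: eventually_mono)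
  then have regular: "eventually (\<lambda>x. compact (F x) \<and> F x \<noteq> {}) (at_left x0)"
      "eventually (\<lambda>x. compact (F x) \<and> F x \<noteq> {}) (at_right x0)"
    unfolding eventually_at_split by auto
  have sides: "eventually (\<lambda>x. x < x0) (at_left x0)" "eventually (\<lambda>x. x > x0) (at_right x0)"
    by (simp_all add: eventually_at_filter)
  have "eventually (\<lambda>x. x \<noteq> x0 \<and> compact (F x) \<and> F x \<noteq> {} \<and>
          (\<forall>y. LM_anchor Dp Dm x0 y x = (\<lambda>d. y + (x - x0) *\<^sub>R d) ` Dp y)) (at_right x0)"
    using regular(2) sides(2) by eventually_elim (simp add: LM_anchor_def)
  note right = eventually_LM_approx_along[OF assms(4) _ F0 this]
  have "eventually (\<lambda>x. x \<noteq> x0 \<and> compact (F x) \<and> F x \<noteq> {} \<and>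
          (\<forall>y. LM_anchor Dp Dm x0 y x = (\<lambda>d. y + (x - x0) *\<^sub>R d) ` Dm y)) (at_left x0)"
    using regular(1) sides(1) by eventually_elim (auto simp: LM_anchor_def)
  note left = eventually_LM_approx_along[OF assms(5) _ F0 this]
  have approx: "eventually (\<lambda>x. (\<forall>y0\<in>F x0.
             haus (LM_anchor Dp Dm x0 y0 x) ((\<lambda>d. y0 + (x - x0) *\<^sub>R d) ` mdd F x0 x y0)
               \<le> e * \<bar>x - x0\<bar>) \<and> haus (F x) (LM F Dp Dm x0 x) \<le> e * \<bar>x - x0\<bar>) (at x0)"
    if "e > 0" for e
    using left[OF that] right[OF that] by (simp add: eventually_at_split)
  show ?thesis
    using near approx by (simp add: eventually_conj_iff)
qed

end
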